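(* Let $p$ be a prime, let $M_2(\mathbb{F}_p)$ be the ring of $2\times 2$ matrices over $\mathbb{F}_p$, $GL(2,p)$ its group of invertible matrices, and $\chi(A)=\exp\bigl(2\pi i\,\mathrm{Tr}(A)/p\bigr)$ for $A\in M_2(\mathbb{F}_p)$. Let $I_L$ be a minimal left ideal of $M_2(\mathbb{F}_p)$. Then for every nonzero $B\in I_L$, \[\sum_{u\in GL(2,p)}\chi(uB)=p-p^2.\]
   Context: $\mathrm{Tr}(A)\in\mathbb{F}_p$ denotes the trace of $A$, identified with an integer in $\{0,\dots,p-1\}$ in the exponent. *)

theory Defs
  imports "HOL-Analysis.Analysis" "Berlekamp_Zassenhaus.Finite_Field"
begin

text \<open>M_2(F_p) is rendered as ('p mod_ring)^2^2 where CARD('p) = p is prime.\<close>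

definition left_ideal :: "(('a::comm_ring_1)^2^2) set \<Rightarrow> bool" where
  "left_ideal L \<longleftrightarrow> 0 \<in> L \<and> (\<forall>x\<in>L. \<forall>y\<in>L. x - y \<in> L) \<and>
     (\<forall>r. \<forall>x\<in>L. r ** x \<in> L)"

definition minimal_left_ideal :: "(('a::comm_ring_1)^2^2) set \<Rightarrow> bool" where
  "minimal_left_ideal L \<longleftrightarrow> left_ideal L \<and> L \<noteq> {0} \<and>
     (\<forall>J. left_ideal J \<and> J \<subseteq> L \<longrightarrow> J = {0} \<or> J = L)"

definition chi :: "('p::prime_card mod_ring)^2^2 \<Rightarrow> complex" where
  "chi A = exp (2 * pi * \<i> * of_int (to_int_mod_ring (trace A)) / of_nat CARD('p))"

end

theory Submission
  imports Defs
begin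

text \<open>
  A minimal left ideal of \<open>M\<^sub>2(F)\<close> is proper, so its nonzero elements are singular of rank one,
  i.e. of the form \<open>P E\<^sub>1\<^sub>1 Q\<close> with \<open>P, Q\<close> invertible. Since the trace is invariant under
  cyclic permutation and \<open>u \<mapsto> Q u P\<close> permutes \<open>GL(2,p)\<close>, the sum equals
  \<open>\<Sum>\<^sub>u \<psi>(u\<^sub>1\<^sub>1)\<close> for the additive character \<open>\<psi>\<close> of \<open>F\<^sub>p\<close>. Exactly \<open>p\<^sup>2(p-1)\<close> invertible matrices
  have a given nonzero corner entry and \<open>p(p-1)\<^sup>2\<close> have corner entry \<open>0\<close>; as \<open>\<psi>\<close> sums to zero,
  only the defect \<open>p(p-1)\<^sup>2 - p\<^sup>2(p-1) = p - p\<^sup>2\<close> at the corner value \<open>0\<close> survives.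
\<close>

definition add_char :: "'n::nontriv mod_ring \<Rightarrow> complex" where
  "add_char x = exp (2 * pi * \<i> * of_int (to_int_mod_ring x) / of_nat CARD('n))"

lemma add_char_0 [simp]: "add_char 0 = 1"
  by (simp add: add_char_def)

lemma sum_add_char: "(\<Sum>x\<in>UNIV. add_char (x :: 'n::nontriv mod_ring)) = 0"
proof -
  let ?n = "CARD('n)"
  have n: "?n > 1" by (rule nontriv)
  have "(\<Sum>x\<in>UNIV. add_char (x :: 'n mod_ring))
      = (\<Sum>k\<in>range (to_int_mod_ring :: 'n mod_ring \<Rightarrow> int). exp (2 * pi * \<i> * of_int k / of_nat ?n))"
    unfolding add_char_def
    by (subst sum.reindex) (auto intro: inj_onI simp: to_int_mod_ring_hom.injectivity)
  also have "\<dots> = (\<Sum>k\<in>int ` {0..<?n}. exp (2 * pi * \<i> * of_int k / of_nat ?n))"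
    unfolding range_to_int_mod_ring image_int_atLeastLessThan by simp
  also have "\<dots> = (\<Sum>k<?n. cis (2 * pi * real k / real ?n))"
    unfolding lessThan_atLeast0
    by (subst sum.reindex) (auto simp: cis_conv_exp intro!: sum.cong arg_cong[where f = exp])
  also have "\<dots> = \<Sum>{z::complex. z ^ ?n = 1}"
    using Complex.bij_betw_roots_unity[of ?n] n by (intro sum.reindex_bij_betw) simp
  also have "\<dots> = 0"
    using n by (rule sum_roots_unity)
  finally show ?thesis .
qed

lemma chi_eq_add_char_trace: "chi A = add_char (trace A)"
  by (simp add: chi_def add_char_def)

definition mat2 :: "'a::zero \<Rightarrow> 'a \<Rightarrow> 'a \<Rightarrow> 'a \<Rightarrow> 'a^2^2" where
  "mat2 a b c d = vector [vector [a, b], vector [c, d]]"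

lemma mat2_nth [simp]:
  "mat2 a b c d $ 1 $ 1 = a" "mat2 a b c d $ 1 $ 2 = b"
  "mat2 a b c d $ 2 $ 1 = c" "mat2 a b c d $ 2 $ 2 = d"
  by (simp_all add: mat2_def)

lemma matrix2_eq_iff:
  "(A :: 'a^2^2) = B \<longleftrightarrow>
     A$1$1 = B$1$1 \<and> A$1$2 = B$1$2 \<and> A$2$1 = B$2$1 \<and> A$2$2 = B$2$2"
  by (auto simp: vec_eq_iff forall_2)

lemma matrix2_mult_nth: "((A :: 'a::semiring_1^2^2) ** B) $ i $ j = A$i$1 * B$1$j + A$i$2 * B$2$j"
  by (simp add: matrix_matrix_mult_def sum_2)

lemma invertible_matrix2_iff:
  "invertible (A :: 'a::field^2^2) \<longleftrightarrow> A$1$1 * A$2$2 \<noteq> A$1$2 * A$2$1"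
  by (simp add: invertible_det_nz det_2)

definition E11 :: "'a::zero_neq_one^2^2" where
  "E11 = mat2 1 0 0 0"

lemma trace_mult_E11: "trace (A ** E11) = (A :: 'a::comm_ring_1^2^2) $ 1 $ 1"
  by (simp add: trace_def sum_2 matrix2_mult_nth E11_def)

lemma left_ideal_left_multiples: "left_ideal (range (\<lambda>r. r ** (A :: 'a::comm_ring_1^2^2)))"
  unfolding left_ideal_def
proof (intro conjI ballI allI)
  show "0 \<in> range (\<lambda>r. r ** A)"
    by (rule range_eqI[where x = 0]) simp
next
  fix x y :: "'a^2^2" assume "x \<in> range (\<lambda>r. r ** A)" "y \<in> range (\<lambda>r. r ** A)"
  then obtain a b where "x = a ** A" "y = b ** A" by blast
  then show "x - y \<in> range (\<lambda>r. r ** A)"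
    by (intro range_eqI[where x = "a - b"]) (simp add: matrix2_eq_iff matrix2_mult_nth algebra_simps)
next
  fix r x :: "'a^2^2" assume "x \<in> range (\<lambda>r. r ** A)"
  then obtain a where "x = a ** A" by blast
  then show "r ** x \<in> range (\<lambda>r. r ** A)"
    by (intro range_eqI[where x = "r ** a"]) (simp add: matrix_mul_assoc)
qed

lemma left_ideal_with_invertible_eq_UNIV:
  assumes "left_ideal L" "B \<in> L" "invertible (B :: 'a::field^2^2)"
  shows "L = UNIV"
proof -
  obtain B' where B': "B' ** B = mat 1"
    using assms(3) invertible_left_inverse by blast
  have "X \<in> L" for X
  proof -
    have "X = (X ** B') ** B"
      by (metis B' matrix_mul_assoc matrix_mul_rid)
    then show ?thesis
      using assms(1,2) unfolding left_ideal_def by metis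
  qed
  then show ?thesis
    by blast
qed

lemma minimal_left_ideal_not_invertible:
  assumes "minimal_left_ideal L" "B \<in> L"
  shows "\<not> invertible (B :: 'a::field^2^2)"
proof
  assume "invertible B"
  moreover have "left_ideal L"
    and minimal: "\<And>J. left_ideal J \<Longrightarrow> J \<subseteq> L \<Longrightarrow> J = {0} \<or> J = L"
    using assms(1) by (simp_all add: minimal_left_ideal_def)
  ultimately have L: "L = UNIV"
    using assms(2) left_ideal_with_invertible_eq_UNIV by blast
  let ?J = "range (\<lambda>r :: 'a^2^2. r ** E11)"
  have "?J = {0} \<or> ?J = L"
    using minimal[OF left_ideal_left_multiples] by (simp add: L)
  moreover have "E11 \<in> ?J"
    by (rule range_eqI[where x = "mat 1"]) simp
  moreover have "E11 \<noteq> 0"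
    by (simp add: E11_def matrix2_eq_iff)
  moreover have "mat 1 \<notin> ?J"
    by (auto simp: E11_def matrix2_eq_iff matrix2_mult_nth mat_def)
  ultimately show False
    using L by (metis UNIV_I singletonD)
qed

lemma matrix2_nonzero_entry_to_corner:
  assumes "(B :: 'a::field^2^2) \<noteq> 0"
  obtains S T :: "'a::field^2^2" where "S ** S = mat 1" "T ** T = mat 1" "(S ** B ** T) $ 1 $ 1 \<noteq> 0"
proof -
  let ?S = "mat2 0 1 1 (0::'a)" and ?I = "mat 1 :: 'a^2^2"
  have sq: "?S ** ?S = mat 1" "?I ** ?I = mat 1"
    by (simp_all add: matrix2_eq_iff matrix2_mult_nth mat_def)
  have "(?I ** B ** ?I)$1$1 = B$1$1" "(?I ** B ** ?S)$1$1 = B$1$2"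
    "(?S ** B ** ?I)$1$1 = B$2$1" "(?S ** B ** ?S)$1$1 = B$2$2"
    by (simp_all add: matrix2_mult_nth)
  moreover have "B$1$1 \<noteq> 0 \<or> B$1$2 \<noteq> 0 \<or> B$2$1 \<noteq> 0 \<or> B$2$2 \<noteq> 0"
    using assms by (auto simp: matrix2_eq_iff)
  ultimately show ?thesis
    using that[of ?I ?I] that[of ?I ?S] that[of ?S ?I] that[of ?S ?S] sq by auto
qed

lemma singular_matrix2_with_corner_eq_E11:
  assumes "det (B :: 'a::field^2^2) = 0" "B$1$1 \<noteq> 0"
  obtains P Q where "invertible P" "invertible Q" "B = P ** E11 ** Q"
proof
  show "invertible (mat2 (B$1$1) 0 (B$2$1) 1)" "invertible (mat2 1 (B$1$2 / B$1$1) 0 1)"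
    using assms(2) by (simp_all add: invertible_matrix2_iff)
  show "B = mat2 (B$1$1) 0 (B$2$1) 1 ** E11 ** mat2 1 (B$1$2 / B$1$1) 0 1"
    using assms by (simp add: det_2 E11_def matrix2_eq_iff matrix2_mult_nth field_simps)
qed

lemma singular_matrix2_eq_E11:
  assumes "det (B :: 'a::field^2^2) = 0" "B \<noteq> 0"
  obtains P Q where "invertible P" "invertible Q" "B = P ** E11 ** Q"
proof -
  obtain S T :: "'a^2^2" where S: "S ** S = mat 1" and T: "T ** T = mat 1"
    and corner: "(S ** B ** T) $ 1 $ 1 \<noteq> 0"
    using matrix2_nonzero_entry_to_corner assms(2) by blast
  define B' where "B' = S ** B ** T"
  have "det B' = 0"
    by (simp add: B'_def det_mul assms(1))
  then obtain X Y where X: "invertible X" and Y: "invertible Y" and B': "B' = X ** E11 ** Y"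
    using singular_matrix2_with_corner_eq_E11 corner unfolding B'_def[symmetric] by blast
  have "invertible S" "invertible T"
    using S T invertible_def by blast+
  moreover have "B = S ** B' ** T"
    by (metis B'_def S T matrix_mul_assoc matrix_mul_lid matrix_mul_rid)
  then have "B = (S ** X) ** E11 ** (Y ** T)"
    by (simp add: B' matrix_mul_assoc)
  ultimately show ?thesis
    using X Y by (intro that[of "S ** X" "Y ** T"] invertible_mult)
qed

lemma sum_invertible_mult_both:
  fixes P Q :: "'a::field^'n^'n"
  assumes "invertible P" "invertible Q"
  shows "(\<Sum>u\<in>{u. invertible u}. f (Q ** u ** P)) = (\<Sum>u\<in>{u. invertible u}. f u)"
proof -
  obtain P' where P': "P ** P' = mat 1" "P' ** P = mat 1"
    using assms(1) invertible_def by blast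
  obtain Q' where Q': "Q ** Q' = mat 1" "Q' ** Q = mat 1"
    using assms(2) invertible_def by blast
  have "invertible P'" "invertible Q'"
    using P' Q' invertible_def by blast+
  then show ?thesis
  proof (intro sum.reindex_bij_witness[where i = "\<lambda>u. Q' ** u ** P'" and j = "\<lambda>u. Q ** u ** P"])
    show "Q' ** (Q ** a ** P) ** P' = a" for a
      by (metis P'(1) Q'(2) matrix_mul_assoc matrix_mul_lid matrix_mul_rid)
    show "Q ** (Q' ** a ** P') ** P = a" for a
      by (metis P'(2) Q'(1) matrix_mul_assoc matrix_mul_lid matrix_mul_rid)
  qed (auto intro!: invertible_mult assms)
qed

lemma card_invertible_matrix2_corner:
  fixes a :: "'a::{finite,field}"
  shows "card {u :: 'a^2^2. invertible u \<and> u$1$1 = a} =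
           (if a = 0 then CARD('a) * (CARD('a) - 1)^2 else CARD('a)^2 * (CARD('a) - 1))"
proof -
  let ?T = "{(b, c, d). a * d \<noteq> b * c}"
  have "{u :: 'a^2^2. invertible u \<and> u$1$1 = a} = (\<lambda>(b, c, d). mat2 a b c d) ` ?T"
    by (auto simp: invertible_matrix2_iff image_iff matrix2_eq_iff intro!: exI[of _ "(_, _, _)"])
  moreover have "inj_on (\<lambda>(b, c, d). mat2 a b c d) ?T"
    by (auto intro!: inj_onI simp: matrix2_eq_iff)
  ultimately have "card {u :: 'a^2^2. invertible u \<and> u$1$1 = a} = card ?T"
    by (simp add: card_image)
  moreover have "?T = (UNIV - {0}) \<times> (UNIV - {0}) \<times> UNIV" if "a = 0"
    using that by auto
  moreover have "?T = Sigma UNIV (\<lambda>b. Sigma UNIV (\<lambda>c. UNIV - {b * c / a}))" if "a \<noteq> 0"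
    using that by (auto simp: field_simps)
  ultimately show ?thesis
    by (simp add: card_Diff_singleton card_cartesian_product power2_eq_square)
qed

lemma sum_invertible_matrix2_corner:
  fixes f :: "'a::{finite,field} \<Rightarrow> 'b::comm_ring_1"
  shows "(\<Sum>u\<in>{u :: 'a^2^2. invertible u}. f (u$1$1))
           = of_nat (CARD('a)^2 * (CARD('a) - 1)) * sum f UNIV
             - of_nat (CARD('a) * (CARD('a) - 1)) * f 0"
proof -
  let ?q = "CARD('a)"
  have defect: "?q * (?q - 1)^2 + ?q * (?q - 1) = ?q^2 * (?q - 1)"
    by (cases ?q) (simp_all add: power2_eq_square algebra_simps)
  have count: "of_nat (card {u :: 'a^2^2. invertible u \<and> u$1$1 = a}) =
      (of_nat (?q^2 * (?q - 1)) - (if a = 0 then of_nat (?q * (?q - 1)) else 0) :: 'b)" for a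
  proof (cases "a = 0")
    case True
    then show ?thesis
      using arg_cong[OF defect, of "of_nat :: nat \<Rightarrow> 'b"]
      by (simp only: card_invertible_matrix2_corner simp_thms if_True of_nat_add eq_diff_eq)
  next
    case False
    then show ?thesis
      by (simp add: card_invertible_matrix2_corner)
  qed
  have "(\<Sum>u\<in>{u :: 'a^2^2. invertible u}. f (u$1$1))
      = (\<Sum>a\<in>UNIV. \<Sum>u\<in>{u. u \<in> {u :: 'a^2^2. invertible u} \<and> u$1$1 = a}. f (u$1$1))"
    by (rule sum.group[symmetric]) auto
  also have "\<dots> = (\<Sum>a\<in>UNIV. of_nat (card {u :: 'a^2^2. invertible u \<and> u$1$1 = a}) * f a)"
    by (intro sum.cong) auto
  also have "\<dots> = (\<Sum>a\<in>UNIV. of_nat (?q^2 * (?q - 1)) * f a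
                       - (if a = 0 then of_nat (?q * (?q - 1)) * f 0 else 0))"
    by (intro sum.cong) (auto simp: count algebra_simps)
  finally show ?thesis
    by (simp add: sum_subtractf sum_distrib_left)
qed

theorem theorem2p4:
  fixes IL :: "(('p::prime_card mod_ring)^2^2) set" and B :: "('p mod_ring)^2^2"
  assumes "minimal_left_ideal IL" and "B \<in> IL" and "B \<noteq> 0"
  shows "(\<Sum>u\<in>{u :: ('p mod_ring)^2^2. invertible u}. chi (u ** B))
           = of_nat CARD('p) - (of_nat CARD('p))^2"
proof -
  have "det B = 0"
    using minimal_left_ideal_not_invertible assms(1,2) invertible_det_nz by blast
  then obtain P Q where P: "invertible P" and Q: "invertible Q" and B: "B = P ** E11 ** Q"
    using singular_matrix2_eq_E11 assms(3) by blast
  have "chi (u ** B) = chi ((Q ** u ** P) ** E11)" for u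
    unfolding B chi_def by (metis trace_mul_sym matrix_mul_assoc)
  then have "(\<Sum>u\<in>{u :: ('p mod_ring)^2^2. invertible u}. chi (u ** B))
      = (\<Sum>u\<in>{u :: ('p mod_ring)^2^2. invertible u}. chi (u ** E11))"
    using sum_invertible_mult_both[OF P Q, of "\<lambda>u. chi (u ** E11)"] by simp
  also have "\<dots> = (\<Sum>u\<in>{u :: ('p mod_ring)^2^2. invertible u}. add_char (u$1$1))"
    by (simp add: chi_eq_add_char_trace trace_mult_E11)
  also have "\<dots> = - of_nat (CARD('p) * (CARD('p) - 1))"
    by (simp add: sum_invertible_matrix2_corner sum_add_char)
  also have "\<dots> = of_nat CARD('p) - (of_nat CARD('p))^2"
    using nontriv[where 'a = 'p] by (simp add: of_nat_diff power2_eq_square algebra_simps)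
  finally show ?thesis .
qed

end
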